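(* For the least-squares approximate policy iteration sequence described in the context, for every $k\ge1$, $$\|J_k-J^{\mu_k}\|_\infty\le \alpha^{m+H-1}\delta_{FV}\,\|J_{k-1}-J^{\mu_{k-1}}\|_\infty+\frac{\alpha^m+\alpha^{m+H-1}}{1-\alpha}\delta_{FV}+\delta_{app}+\delta_{FV}\epsilon_{PE}.$$ Consequently, writing $\beta:=\alpha^{m+H-1}\delta_{FV}$ and $\tau:=\frac{\alpha^m+\alpha^{m+H-1}}{1-\alpha}\delta_{FV}+\delta_{app}+\delta_{FV}\epsilon_{PE}$, if $\beta<1$ then $\|J_k-J^{\mu_k}\|_\infty\le\beta^k\|J_0-J^{\mu_0}\|_\infty+\frac{\tau}{1-\beta}$ for all $k\ge0$.
   Context: Consider a Markov decision process with finite state space $S$, finite action space $A$, transition probabilities $P_{ij}(a)$, rewards $r(s,a)\in[0,1]$, and discount factor $\alpha\in(0,1)$. A (deterministic stationary) policy is a map $\mu:S\to A$; its value is $J^\mu(s)=E[\sum_{t\ge0}\alpha^t r(s_t,\mu(s_t))\mid s_0=s]$, and $J^*(s)=\max_\mu J^\mu(s)$. For a policy $\mu$, $(T_\mu J)(s)=r(s,\mu(s))+\alpha\sum_j P_{sj}(\mu(s))J(j)$; the Bellman operator is $(TJ)(s)=\max_{a\in A}\{r(s,a)+\alpha\sum_j P_{sj}(a)J(j)\}$; powers denote repeated application. $\|\cdot\|_\infty$ denotes the max norm and the induced matrix norm. Least-squares approximate policy iteration: fix integers $m\ge1$, $H\ge1$, constants $\epsilon_{LA},\epsilon_{PE}\ge0$,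 a feature matrix $\Phi\in\mathbb{R}^{|S|\times d}$ whose row $i$ is $\phi(i)^\top$, and subsets $D_k\subseteq S$ ($k\ge0$) such that $\{\phi(i)\}_{i\in D_k}$ has rank $d$. Let $\Phi_{D_k}$ be the submatrix of $\Phi$ with rows indexed by $D_k$, $P_k\in\{0,1\}^{|D_k|\times|S|}$ the matrix selecting the coordinates in $D_k$, and $\mathcal{M}_{k+1}:=\Phi(\Phi_{D_k}^\top\Phi_{D_k})^{-1}\Phi_{D_k}^\top P_k$ for $k\ge0$. Start with arbitrary $J_0\in\mathbb{R}^{|S|}$ and an arbitrary policy $\mu_0$. For each $k\ge0$: $\mu_{k+1}$ is any policy with $\|T^HJ_k-T_{\mu_{k+1}}T^{H-1}J_k\|_\infty\le\epsilon_{LA}$; $w_{k+1}\in\mathbb{R}^{|S|}$ is a noise vector with $w_{k+1}(i)=0$ for $i\notin D_k$ and $\|w_{k+1}\|_\infty\le\epsilon_{PE}$; and $J_{k+1}=\mathcal{M}_{k+1}(T^m_{\mu_{k+1}}T^{H-1}J_k+w_{k+1})$. Define $\delta_{FV}:=\sup_{k\ge1}\|\mathcal{M}_k\|_\infty$ (assumed finite) and $\delta_{app}:=\sup_{k\ge1}\sup_{\mu}\|\mathcal{M}_kJ^\mu-J^\mu\|_\infty$, the inner supremum over all policies. *)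

theory Defs
  imports "HOL-Analysis.Analysis"
begin

text \<open>Value vectors are functions on the finite state type 's; matrices are
  functions 's => 's => real. P s a j is the transition probability P_{sj}(a).\<close>

definition supnorm :: "('s::finite \<Rightarrow> real) \<Rightarrow> real" where
  "supnorm J = Max (range (\<lambda>s. \<bar>J s\<bar>))"

definition matnorm :: "('s::finite \<Rightarrow> 's \<Rightarrow> real) \<Rightarrow> real" where
  "matnorm M = Max (range (\<lambda>s. \<Sum>j\<in>UNIV. \<bar>M s j\<bar>))"

definition matapp :: "('s::finite \<Rightarrow> 's \<Rightarrow> real) \<Rightarrow> ('s \<Rightarrow> real) \<Rightarrow> ('s \<Rightarrow> real)" where
  "matapp M x = (\<lambda>s. \<Sum>j\<in>UNIV. M s j * x j)"

definition Tmu :: "('s::finite \<Rightarrow> 'a \<Rightarrow> 's \<Rightarrow> real) \<Rightarrow> ('s \<Rightarrow> 'a \<Rightarrow> real) \<Rightarrow> real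
    \<Rightarrow> ('s \<Rightarrow> 'a) \<Rightarrow> ('s \<Rightarrow> real) \<Rightarrow> ('s \<Rightarrow> real)" where
  "Tmu P r \<alpha> \<mu> J = (\<lambda>s. r s (\<mu> s) + \<alpha> * (\<Sum>j\<in>UNIV. P s (\<mu> s) j * J j))"

definition Tbell :: "('s::finite \<Rightarrow> 'a::finite \<Rightarrow> 's \<Rightarrow> real) \<Rightarrow> ('s \<Rightarrow> 'a \<Rightarrow> real) \<Rightarrow> real
    \<Rightarrow> ('s \<Rightarrow> real) \<Rightarrow> ('s \<Rightarrow> real)" where
  "Tbell P r \<alpha> J = (\<lambda>s. Max (range (\<lambda>a. r s a + \<alpha> * (\<Sum>j\<in>UNIV. P s a j * J j))))"

fun Pstep :: "('s::finite \<Rightarrow> 'a \<Rightarrow> 's \<Rightarrow> real) \<Rightarrow> ('s \<Rightarrow> 'a) \<Rightarrow> nat \<Rightarrow> 's \<Rightarrow> 's \<Rightarrow> real" where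
  "Pstep P \<mu> 0 s j = (if s = j then 1 else 0)"
| "Pstep P \<mu> (Suc t) s j = (\<Sum>i\<in>UNIV. Pstep P \<mu> t s i * P i (\<mu> i) j)"

text \<open>J^mu(s) = E[sum_t alpha^t r(s_t, mu(s_t)) | s_0 = s], with the expectation
  of the t-th reward written out via the t-step transition probabilities.\<close>
definition Jpol :: "('s::finite \<Rightarrow> 'a \<Rightarrow> 's \<Rightarrow> real) \<Rightarrow> ('s \<Rightarrow> 'a \<Rightarrow> real) \<Rightarrow> real
    \<Rightarrow> ('s \<Rightarrow> 'a) \<Rightarrow> ('s \<Rightarrow> real)" where
  "Jpol P r \<alpha> \<mu> = (\<lambda>s. \<Sum>t. \<alpha> ^ t * (\<Sum>j\<in>UNIV. Pstep P \<mu> t s j * r j (\<mu> j)))"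

text \<open>Gram matrix Phi_D^T Phi_D = sum over i in D of phi(i) phi(i)^T.\<close>
definition gram :: "('s \<Rightarrow> real^'d) \<Rightarrow> 's set \<Rightarrow> real^'d^'d" where
  "gram \<phi> D = (\<Sum>i\<in>D. (\<chi> a b. (\<phi> i) $ a * (\<phi> i) $ b))"

text \<open>The matrix Phi (Phi_D^T Phi_D)^{-1} Phi_D^T P_D, written entrywise:
  entry (s,j) is phi(s)^T G^{-1} phi(j) if j in D and 0 otherwise.\<close>
definition lsq_mat :: "('s::finite \<Rightarrow> real^'d) \<Rightarrow> 's set \<Rightarrow> 's \<Rightarrow> 's \<Rightarrow> real" where
  "lsq_mat \<phi> D = (\<lambda>s j. if j \<in> D then \<phi> s \<bullet> (matrix_inv (gram \<phi> D) *v \<phi> j) else 0)"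

end

theory Submission
  imports Defs
begin

text \<open>Every value function J^nu is the fixed point of the alpha-contraction T_nu and lies in
  [0, 1/(1-alpha)], as do all Bellman iterates of such a function. Hence, with
  e = \<parallel>J_k - J^mu_k\<parallel>, the lookahead T^(H-1) J_k is within alpha^(H-1) e + 1/(1-alpha)
  of J^mu_(k+1), the m policy-evaluation steps shrink this by alpha^m, and the least-squares
  projection costs a factor delta_FV plus the representation error delta_app of J^mu_(k+1)
  and the propagated noise delta_FV eps_PE. Unrolling the resulting affine recursion
  e_(k+1) <= beta e_k + tau gives the geometric bound.\<close>

lemma abs_le_supnorm: "\<bar>x s\<bar> \<le> supnorm (x :: 's::finite \<Rightarrow> real)"
  unfolding supnorm_def by (rule Max_ge) auto

lemma supnorm_leI: "(\<And>s. \<bar>x s\<bar> \<le> c) \<Longrightarrow> supnorm (x :: 's::finite \<Rightarrow> real) \<le> c"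
  unfolding supnorm_def by (subst Max_le_iff) auto

lemma supnorm_nonneg: "0 \<le> supnorm (x :: 's::finite \<Rightarrow> real)"
  using abs_le_supnorm[of x] abs_ge_zero order_trans by blast

lemma row_sum_le_matnorm: "(\<Sum>j\<in>UNIV. \<bar>M s j\<bar>) \<le> matnorm (M :: 's::finite \<Rightarrow> 's \<Rightarrow> real)"
  unfolding matnorm_def by (rule Max_ge) auto

lemma matnorm_nonneg: "0 \<le> matnorm (M :: 's::finite \<Rightarrow> 's \<Rightarrow> real)"
  using row_sum_le_matnorm[of M] sum_nonneg[of UNIV "\<lambda>j. \<bar>M _ j\<bar>"]
  by (meson abs_ge_zero order_trans)

lemma abs_matapp_le: "\<bar>matapp M x s\<bar> \<le> matnorm M * supnorm (x :: 's::finite \<Rightarrow> real)"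
proof -
  have "\<bar>matapp M x s\<bar> \<le> (\<Sum>j\<in>UNIV. \<bar>M s j\<bar> * \<bar>x j\<bar>)"
    unfolding matapp_def using sum_abs[of "\<lambda>j. M s j * x j" UNIV] by (simp add: abs_mult)
  also have "\<dots> \<le> (\<Sum>j\<in>UNIV. \<bar>M s j\<bar>) * supnorm x"
    unfolding sum_distrib_right by (rule sum_mono) (simp add: abs_le_supnorm mult_left_mono)
  also have "\<dots> \<le> matnorm M * supnorm x"
    by (rule mult_right_mono[OF row_sum_le_matnorm supnorm_nonneg])
  finally show ?thesis .
qed

lemma supnorm_matapp_perturbed_le:
  fixes M :: "'s::finite \<Rightarrow> 's \<Rightarrow> real"
  shows "supnorm (\<lambda>s. matapp M (\<lambda>s. y s + w s) s - q s)
    \<le> matnorm M * supnorm (\<lambda>s. y s - q s) + supnorm (\<lambda>s. matapp M q s - q s)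
       + matnorm M * supnorm w"
proof (rule supnorm_leI)
  fix s
  have "matapp M (\<lambda>s. y s + w s) s
      = (\<Sum>j\<in>UNIV. M s j * (y j - q j) + M s j * q j + M s j * w j)"
    unfolding matapp_def by (rule sum.cong) (simp_all add: algebra_simps)
  then have "matapp M (\<lambda>s. y s + w s) s - q s
      = matapp M (\<lambda>s. y s - q s) s + (matapp M q s - q s) + matapp M w s"
    unfolding matapp_def by (simp add: sum.distrib)
  moreover note abs_matapp_le[of M "\<lambda>s. y s - q s" s] abs_matapp_le[of M w s]
    abs_le_supnorm[of "\<lambda>s. matapp M q s - q s" s]
  ultimately show "\<bar>matapp M (\<lambda>s. y s + w s) s - q s\<bar>
      \<le> matnorm M * supnorm (\<lambda>s. y s - q s) + supnorm (\<lambda>s. matapp M q s - q s)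
         + matnorm M * supnorm w"
    by linarith
qed

lemma supnorm_funpow_contraction:
  fixes F :: "('s::finite \<Rightarrow> real) \<Rightarrow> ('s \<Rightarrow> real)"
  assumes contr: "\<And>x y. supnorm (\<lambda>s. F x s - F y s) \<le> c * supnorm (\<lambda>s. x s - y s)"
    and "0 \<le> c"
  shows "supnorm (\<lambda>s. (F ^^ n) x s - (F ^^ n) y s) \<le> c ^ n * supnorm (\<lambda>s. x s - y s)"
proof (induction n)
  case 0
  then show ?case by simp
next
  case (Suc n)
  have "supnorm (\<lambda>s. (F ^^ Suc n) x s - (F ^^ Suc n) y s)
      \<le> c * supnorm (\<lambda>s. (F ^^ n) x s - (F ^^ n) y s)"
    using contr by simp
  also have "\<dots> \<le> c * (c ^ n * supnorm (\<lambda>s. x s - y s))"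
    using Suc \<open>0 \<le> c\<close> by (rule mult_left_mono)
  finally show ?case by simp
qed

lemma abs_stochastic_sum_le:
  fixes p :: "'s::finite \<Rightarrow> real"
  assumes "\<And>j. 0 \<le> p j" "(\<Sum>j\<in>UNIV. p j) = 1"
  shows "\<bar>\<Sum>j\<in>UNIV. p j * x j\<bar> \<le> supnorm x"
proof -
  have "\<bar>\<Sum>j\<in>UNIV. p j * x j\<bar> \<le> (\<Sum>j\<in>UNIV. p j * \<bar>x j\<bar>)"
    by (rule order_trans[OF sum_abs]) (simp add: abs_mult assms(1))
  also have "\<dots> \<le> (\<Sum>j\<in>UNIV. p j * supnorm x)"
    by (rule sum_mono) (rule mult_left_mono[OF abs_le_supnorm assms(1)])
  also have "\<dots> = supnorm x"
    using assms(2) by (simp add: sum_distrib_right[symmetric])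
  finally show ?thesis .
qed

lemma stochastic_sum_bounds:
  fixes p :: "'s::finite \<Rightarrow> real"
  assumes "\<And>j. 0 \<le> p j" "(\<Sum>j\<in>UNIV. p j) = 1" "\<And>j. a \<le> x j \<and> x j \<le> b"
  shows "a \<le> (\<Sum>j\<in>UNIV. p j * x j) \<and> (\<Sum>j\<in>UNIV. p j * x j) \<le> b"
proof
  have "(\<Sum>j\<in>UNIV. p j * a) \<le> (\<Sum>j\<in>UNIV. p j * x j)"
    by (rule sum_mono) (rule mult_left_mono, use assms in auto)
  then show "a \<le> (\<Sum>j\<in>UNIV. p j * x j)"
    using assms(2) by (simp add: sum_distrib_right[symmetric])
  have "(\<Sum>j\<in>UNIV. p j * x j) \<le> (\<Sum>j\<in>UNIV. p j * b)"
    by (rule sum_mono) (rule mult_left_mono, use assms in auto)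
  then show "(\<Sum>j\<in>UNIV. p j * x j) \<le> b"
    using assms(2) by (simp add: sum_distrib_right[symmetric])
qed

lemma abs_Max_range_diff_le:
  fixes f g :: "'b::finite \<Rightarrow> real"
  assumes "\<And>a. \<bar>f a - g a\<bar> \<le> c"
  shows "\<bar>Max (range f) - Max (range g)\<bar> \<le> c"
proof -
  obtain a where a: "Max (range f) = f a" using Max_in[of "range f"] by fastforce
  obtain b where b: "Max (range g) = g b" using Max_in[of "range g"] by fastforce
  have "g a \<le> Max (range g)" "f b \<le> Max (range f)" by (auto intro: Max_ge)
  then show ?thesis using a b assms[of a] assms[of b] by (auto simp: abs_le_iff)
qed

lemma affine_recursion_bound:
  fixes e :: "nat \<Rightarrow> real"
  assumes step: "\<And>n. e (Suc n) \<le> \<beta> * e n + \<tau>"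
    and "0 \<le> \<beta>" "\<beta> < 1" "0 \<le> \<tau>"
  shows "e k \<le> \<beta> ^ k * e 0 + \<tau> / (1 - \<beta>)"
proof (induction k)
  case 0
  then show ?case using assms by simp
next
  case (Suc k)
  have "e (Suc k) \<le> \<beta> * (\<beta> ^ k * e 0 + \<tau> / (1 - \<beta>)) + \<tau>"
    using step[of k] mult_left_mono[OF Suc \<open>0 \<le> \<beta>\<close>] by linarith
  also have "\<dots> = \<beta> ^ Suc k * e 0 + \<tau> / (1 - \<beta>)"
    using \<open>\<beta> < 1\<close> by (simp add: field_simps)
  finally show ?case .
qed

locale discounted_mdp =
  fixes P :: "'s::finite \<Rightarrow> 'a::finite \<Rightarrow> 's \<Rightarrow> real" and r :: "'s \<Rightarrow> 'a \<Rightarrow> real"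
    and \<alpha> :: real
  assumes P_nonneg: "\<And>s a j. 0 \<le> P s a j"
    and P_stoch: "\<And>s a. (\<Sum>j\<in>UNIV. P s a j) = 1"
    and r_range: "\<And>s a. 0 \<le> r s a \<and> r s a \<le> 1"
    and alpha: "0 < \<alpha>" "\<alpha> < 1"
begin

lemma Tmu_contraction:
  "supnorm (\<lambda>s. Tmu P r \<alpha> \<nu> J1 s - Tmu P r \<alpha> \<nu> J2 s) \<le> \<alpha> * supnorm (\<lambda>s. J1 s - J2 s)"
proof (rule supnorm_leI)
  fix s
  have "Tmu P r \<alpha> \<nu> J1 s - Tmu P r \<alpha> \<nu> J2 s = \<alpha> * (\<Sum>j\<in>UNIV. P s (\<nu> s) j * (J1 j - J2 j))"
    unfolding Tmu_def by (simp add: algebra_simps sum_subtractf)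
  moreover have "\<bar>\<Sum>j\<in>UNIV. P s (\<nu> s) j * (J1 j - J2 j)\<bar> \<le> supnorm (\<lambda>s. J1 s - J2 s)"
    by (rule abs_stochastic_sum_le) (auto simp: P_nonneg P_stoch)
  ultimately show "\<bar>Tmu P r \<alpha> \<nu> J1 s - Tmu P r \<alpha> \<nu> J2 s\<bar> \<le> \<alpha> * supnorm (\<lambda>s. J1 s - J2 s)"
    using alpha by (simp add: abs_mult)
qed

lemma Tbell_contraction:
  "supnorm (\<lambda>s. Tbell P r \<alpha> J1 s - Tbell P r \<alpha> J2 s) \<le> \<alpha> * supnorm (\<lambda>s. J1 s - J2 s)"
proof (rule supnorm_leI)
  fix s
  show "\<bar>Tbell P r \<alpha> J1 s - Tbell P r \<alpha> J2 s\<bar> \<le> \<alpha> * supnorm (\<lambda>s. J1 s - J2 s)"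
    unfolding Tbell_def
  proof (rule abs_Max_range_diff_le)
    fix a
    have "\<bar>\<Sum>j\<in>UNIV. P s a j * (J1 j - J2 j)\<bar> \<le> supnorm (\<lambda>s. J1 s - J2 s)"
      by (rule abs_stochastic_sum_le) (auto simp: P_nonneg P_stoch)
    moreover have "(r s a + \<alpha> * (\<Sum>j\<in>UNIV. P s a j * J1 j)) - (r s a + \<alpha> * (\<Sum>j\<in>UNIV. P s a j * J2 j))
        = \<alpha> * (\<Sum>j\<in>UNIV. P s a j * (J1 j - J2 j))"
      by (simp add: algebra_simps sum_subtractf)
    ultimately show "\<bar>(r s a + \<alpha> * (\<Sum>j\<in>UNIV. P s a j * J1 j))
        - (r s a + \<alpha> * (\<Sum>j\<in>UNIV. P s a j * J2 j))\<bar> \<le> \<alpha> * supnorm (\<lambda>s. J1 s - J2 s)"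
      using alpha by (simp add: abs_mult)
  qed
qed

lemma Tbell_bounds:
  assumes "\<And>s. 0 \<le> J s \<and> J s \<le> 1 / (1 - \<alpha>)"
  shows "0 \<le> Tbell P r \<alpha> J s \<and> Tbell P r \<alpha> J s \<le> 1 / (1 - \<alpha>)"
proof -
  have action: "0 \<le> r s a + \<alpha> * (\<Sum>j\<in>UNIV. P s a j * J j)
      \<and> r s a + \<alpha> * (\<Sum>j\<in>UNIV. P s a j * J j) \<le> 1 / (1 - \<alpha>)" for a
  proof -
    have avg: "0 \<le> (\<Sum>j\<in>UNIV. P s a j * J j) \<and> (\<Sum>j\<in>UNIV. P s a j * J j) \<le> 1 / (1 - \<alpha>)"
      by (rule stochastic_sum_bounds) (auto simp: P_nonneg P_stoch assms)
    have "\<alpha> * (\<Sum>j\<in>UNIV. P s a j * J j) \<le> \<alpha> * (1 / (1 - \<alpha>))"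
      by (rule mult_left_mono) (use avg alpha in auto)
    moreover have "1 + \<alpha> * (1 / (1 - \<alpha>)) = 1 / (1 - \<alpha>)"
      using alpha by (simp add: field_simps)
    ultimately show ?thesis using avg r_range[of s a] alpha by auto
  qed
  show ?thesis unfolding Tbell_def
  proof
    have "r s undefined + \<alpha> * (\<Sum>j\<in>UNIV. P s undefined j * J j)
        \<le> Max (range (\<lambda>a. r s a + \<alpha> * (\<Sum>j\<in>UNIV. P s a j * J j)))"
      by (rule Max_ge) auto
    then show "0 \<le> Max (range (\<lambda>a. r s a + \<alpha> * (\<Sum>j\<in>UNIV. P s a j * J j)))"
      using action[of undefined] by linarith
    show "Max (range (\<lambda>a. r s a + \<alpha> * (\<Sum>j\<in>UNIV. P s a j * J j))) \<le> 1 / (1 - \<alpha>)"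
      by (subst Max_le_iff) (auto simp: action)
  qed
qed

lemma Tbell_funpow_bounds:
  assumes "\<And>s. 0 \<le> J s \<and> J s \<le> 1 / (1 - \<alpha>)"
  shows "0 \<le> (Tbell P r \<alpha> ^^ n) J s \<and> (Tbell P r \<alpha> ^^ n) J s \<le> 1 / (1 - \<alpha>)"
  using assms by (induction n arbitrary: s) (auto intro!: Tbell_bounds)

lemma Pstep_nonneg: "0 \<le> Pstep P \<nu> t s j"
  by (induction t arbitrary: j) (auto intro!: sum_nonneg simp: P_nonneg)

lemma Pstep_row_sum: "(\<Sum>j\<in>UNIV. Pstep P \<nu> t s j) = 1"
proof (induction t)
  case 0
  then show ?case by simp
next
  case (Suc t)
  have "(\<Sum>j\<in>UNIV. Pstep P \<nu> (Suc t) s j) = (\<Sum>i\<in>UNIV. Pstep P \<nu> t s i * (\<Sum>j\<in>UNIV. P i (\<nu> i) j))"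
    by (simp add: sum_distrib_left) (rule sum.swap)
  also have "\<dots> = 1" using Suc by (simp add: P_stoch)
  finally show ?case .
qed

lemma Pstep_Suc_first_step: "Pstep P \<nu> (Suc t) s j = (\<Sum>i\<in>UNIV. P s (\<nu> s) i * Pstep P \<nu> t i j)"
proof (induction t arbitrary: s j)
  case 0
  then show ?case by (simp add: mult_if_delta) (simp add: if_distrib cong: if_cong)
next
  case (Suc t)
  have "Pstep P \<nu> (Suc (Suc t)) s j
      = (\<Sum>i\<in>UNIV. (\<Sum>l\<in>UNIV. P s (\<nu> s) l * Pstep P \<nu> t l i) * P i (\<nu> i) j)"
    using Suc by simp
  also have "\<dots> = (\<Sum>l\<in>UNIV. P s (\<nu> s) l * (\<Sum>i\<in>UNIV. Pstep P \<nu> t l i * P i (\<nu> i) j))"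
    by (simp add: sum_distrib_left sum_distrib_right mult.assoc) (rule sum.swap)
  also have "\<dots> = (\<Sum>i\<in>UNIV. P s (\<nu> s) i * Pstep P \<nu> (Suc t) i j)"
    by simp
  finally show ?case .
qed

definition disc_reward :: "('s \<Rightarrow> 'a) \<Rightarrow> 's \<Rightarrow> nat \<Rightarrow> real" where
  "disc_reward \<nu> s t = \<alpha> ^ t * (\<Sum>j\<in>UNIV. Pstep P \<nu> t s j * r j (\<nu> j))"

lemma Jpol_eq_suminf: "Jpol P r \<alpha> \<nu> s = (\<Sum>t. disc_reward \<nu> s t)"
  unfolding Jpol_def disc_reward_def by simp

lemma disc_reward_bounds: "0 \<le> disc_reward \<nu> s t \<and> disc_reward \<nu> s t \<le> \<alpha> ^ t"
proof -
  have "0 \<le> (\<Sum>j\<in>UNIV. Pstep P \<nu> t s j * r j (\<nu> j)) \<and> (\<Sum>j\<in>UNIV. Pstep P \<nu> t s j * r j (\<nu> j)) \<le> 1"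
    by (rule stochastic_sum_bounds) (auto simp: Pstep_nonneg Pstep_row_sum r_range)
  then show ?thesis unfolding disc_reward_def using alpha by (auto simp: mult_left_le)
qed

lemma summable_disc_reward: "summable (disc_reward \<nu> s)"
  by (rule summable_comparison_test[of _ "\<lambda>t. \<alpha> ^ t"])
     (use disc_reward_bounds alpha in \<open>auto intro!: summable_geometric\<close>)

lemma Jpol_bounds: "0 \<le> Jpol P r \<alpha> \<nu> s \<and> Jpol P r \<alpha> \<nu> s \<le> 1 / (1 - \<alpha>)"
proof
  show "0 \<le> Jpol P r \<alpha> \<nu> s"
    unfolding Jpol_eq_suminf
    by (rule suminf_nonneg[OF summable_disc_reward]) (use disc_reward_bounds in auto)
  have "(\<Sum>t. disc_reward \<nu> s t) \<le> (\<Sum>t. \<alpha> ^ t)"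
    by (rule suminf_le)
       (use disc_reward_bounds alpha summable_disc_reward in \<open>auto intro!: summable_geometric\<close>)
  also have "\<dots> = 1 / (1 - \<alpha>)" using alpha by (simp add: suminf_geometric)
  finally show "Jpol P r \<alpha> \<nu> s \<le> 1 / (1 - \<alpha>)" unfolding Jpol_eq_suminf .
qed

lemma disc_reward_Suc:
  "disc_reward \<nu> s (Suc t) = \<alpha> * (\<Sum>i\<in>UNIV. P s (\<nu> s) i * disc_reward \<nu> i t)"
proof -
  have "(\<Sum>j\<in>UNIV. Pstep P \<nu> (Suc t) s j * r j (\<nu> j))
      = (\<Sum>j\<in>UNIV. \<Sum>i\<in>UNIV. P s (\<nu> s) i * (Pstep P \<nu> t i j * r j (\<nu> j)))"
    by (simp only: Pstep_Suc_first_step sum_distrib_right mult.assoc)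
  also have "\<dots> = (\<Sum>i\<in>UNIV. \<Sum>j\<in>UNIV. P s (\<nu> s) i * (Pstep P \<nu> t i j * r j (\<nu> j)))"
    by (rule sum.swap)
  also have "\<dots> = (\<Sum>i\<in>UNIV. P s (\<nu> s) i * (\<Sum>j\<in>UNIV. Pstep P \<nu> t i j * r j (\<nu> j)))"
    by (simp only: sum_distrib_left)
  finally have rewards: "(\<Sum>j\<in>UNIV. Pstep P \<nu> (Suc t) s j * r j (\<nu> j))
      = (\<Sum>i\<in>UNIV. P s (\<nu> s) i * (\<Sum>j\<in>UNIV. Pstep P \<nu> t i j * r j (\<nu> j)))" .
  show ?thesis
    by (simp only: disc_reward_def rewards power_Suc sum_distrib_left mult.assoc mult.left_commute)
qed

lemma Tmu_Jpol: "Tmu P r \<alpha> \<nu> (Jpol P r \<alpha> \<nu>) = Jpol P r \<alpha> \<nu>"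
proof
  fix s
  have "(\<Sum>t. disc_reward \<nu> s t) = (\<Sum>t. disc_reward \<nu> s (Suc t)) + disc_reward \<nu> s 0"
    using suminf_split_head[OF summable_disc_reward, of \<nu> s] by simp
  also have "(\<Sum>t. disc_reward \<nu> s (Suc t))
      = (\<Sum>t. \<alpha> * (\<Sum>i\<in>UNIV. P s (\<nu> s) i * disc_reward \<nu> i t))"
    by (simp only: disc_reward_Suc)
  also have "\<dots> = \<alpha> * (\<Sum>t. \<Sum>i\<in>UNIV. P s (\<nu> s) i * disc_reward \<nu> i t)"
    by (rule suminf_mult) (intro summable_sum summable_mult summable_disc_reward)
  also have "\<dots> = \<alpha> * (\<Sum>i\<in>UNIV. \<Sum>t. P s (\<nu> s) i * disc_reward \<nu> i t)"
    by (subst suminf_sum) (auto intro: summable_mult summable_disc_reward)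
  also have "\<dots> = \<alpha> * (\<Sum>i\<in>UNIV. P s (\<nu> s) i * (\<Sum>t. disc_reward \<nu> i t))"
    by (simp add: suminf_mult summable_disc_reward)
  also have "disc_reward \<nu> s 0 = r s (\<nu> s)"
    unfolding disc_reward_def by (simp add: mult_if_delta)
  finally show "Tmu P r \<alpha> \<nu> (Jpol P r \<alpha> \<nu>) s = Jpol P r \<alpha> \<nu> s"
    unfolding Tmu_def Jpol_eq_suminf by simp
qed

lemma Tmu_funpow_dist_Jpol:
  "supnorm (\<lambda>s. (Tmu P r \<alpha> \<nu> ^^ n) J s - Jpol P r \<alpha> \<nu> s)
    \<le> \<alpha> ^ n * supnorm (\<lambda>s. J s - Jpol P r \<alpha> \<nu> s)"
proof -
  have "(Tmu P r \<alpha> \<nu> ^^ n) (Jpol P r \<alpha> \<nu>) = Jpol P r \<alpha> \<nu>"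
    by (induction n) (simp_all add: Tmu_Jpol)
  moreover have "supnorm (\<lambda>s. (Tmu P r \<alpha> \<nu> ^^ n) J s - (Tmu P r \<alpha> \<nu> ^^ n) (Jpol P r \<alpha> \<nu>) s)
      \<le> \<alpha> ^ n * supnorm (\<lambda>s. J s - Jpol P r \<alpha> \<nu> s)"
    by (rule supnorm_funpow_contraction[OF Tmu_contraction]) (use alpha in simp)
  ultimately show ?thesis by simp
qed

text \<open>The policies nu and nu' need not be related: T^n J^nu' and J^nu both take values
  in [0, 1/(1-alpha)].\<close>
lemma Tbell_funpow_dist_Jpol:
  "supnorm (\<lambda>s. (Tbell P r \<alpha> ^^ n) J s - Jpol P r \<alpha> \<nu> s)
    \<le> \<alpha> ^ n * supnorm (\<lambda>s. J s - Jpol P r \<alpha> \<nu>' s) + 1 / (1 - \<alpha>)"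
proof (rule supnorm_leI)
  fix s
  let ?T = "(Tbell P r \<alpha> ^^ n) (Jpol P r \<alpha> \<nu>')"
  have "\<bar>(Tbell P r \<alpha> ^^ n) J s - ?T s\<bar> \<le> supnorm (\<lambda>s. (Tbell P r \<alpha> ^^ n) J s - ?T s)"
    by (rule abs_le_supnorm)
  also have "\<dots> \<le> \<alpha> ^ n * supnorm (\<lambda>s. J s - Jpol P r \<alpha> \<nu>' s)"
    by (rule supnorm_funpow_contraction[OF Tbell_contraction]) (use alpha in simp)
  finally show "\<bar>(Tbell P r \<alpha> ^^ n) J s - Jpol P r \<alpha> \<nu> s\<bar>
      \<le> \<alpha> ^ n * supnorm (\<lambda>s. J s - Jpol P r \<alpha> \<nu>' s) + 1 / (1 - \<alpha>)"
    using Tbell_funpow_bounds[of "Jpol P r \<alpha> \<nu>'" n s, OF Jpol_bounds] Jpol_bounds[of \<nu> s]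
    by (auto simp: abs_le_iff)
qed

lemma supnorm_approx_Jpol_le:
  "supnorm (\<lambda>s. matapp M (Jpol P r \<alpha> \<nu>) s - Jpol P r \<alpha> \<nu> s)
    \<le> matnorm M * (1 / (1 - \<alpha>)) + 1 / (1 - \<alpha>)"
proof (rule supnorm_leI)
  fix s
  have "supnorm (Jpol P r \<alpha> \<nu>) \<le> 1 / (1 - \<alpha>)"
    by (rule supnorm_leI) (use Jpol_bounds in auto)
  then have "\<bar>matapp M (Jpol P r \<alpha> \<nu>) s\<bar> \<le> matnorm M * (1 / (1 - \<alpha>))"
    using abs_matapp_le[of M "Jpol P r \<alpha> \<nu>" s] matnorm_nonneg[of M]
    by (meson mult_left_mono order_trans)
  then show "\<bar>matapp M (Jpol P r \<alpha> \<nu>) s - Jpol P r \<alpha> \<nu> s\<bar> \<le> matnorm M * (1 / (1 - \<alpha>)) + 1 / (1 - \<alpha>)"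
    using Jpol_bounds[of \<nu> s] by linarith
qed

lemma approx_error_le_SUP:
  fixes M :: "nat \<Rightarrow> 's \<Rightarrow> 's \<Rightarrow> real"
  assumes "bdd_above ((\<lambda>k. matnorm (M (k - 1))) ` {1..})"
  shows "supnorm (\<lambda>s. matapp (M n) (Jpol P r \<alpha> \<nu>) s - Jpol P r \<alpha> \<nu> s)
    \<le> (SUP k\<in>{1..}. SUP \<nu>\<in>(UNIV :: ('s \<Rightarrow> 'a) set).
          supnorm (\<lambda>s. matapp (M (k - 1)) (Jpol P r \<alpha> \<nu>) s - Jpol P r \<alpha> \<nu> s))"
proof -
  let ?err = "\<lambda>k \<nu>. supnorm (\<lambda>s. matapp (M k) (Jpol P r \<alpha> \<nu>) s - Jpol P r \<alpha> \<nu> s)"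
  obtain c where c: "\<And>k. k \<in> {1..} \<Longrightarrow> matnorm (M (k - 1)) \<le> c"
    using assms unfolding bdd_above_def by blast
  have "?err (k - 1) \<nu> \<le> c * (1 / (1 - \<alpha>)) + 1 / (1 - \<alpha>)" if "k \<in> {1..}" for k \<nu>
  proof -
    have "matnorm (M (k - 1)) * (1 / (1 - \<alpha>)) \<le> c * (1 / (1 - \<alpha>))"
      using c[OF that] alpha by (intro mult_right_mono) auto
    then show ?thesis using supnorm_approx_Jpol_le[of "M (k - 1)" \<nu>] by linarith
  qed
  then have "bdd_above ((\<lambda>k. SUP \<nu>\<in>UNIV. ?err (k - 1) \<nu>) ` {1..})"
    by (intro bdd_aboveI[of _ "c * (1 / (1 - \<alpha>)) + 1 / (1 - \<alpha>)"]) (auto intro!: cSUP_least)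
  then have "(SUP \<nu>\<in>UNIV. ?err n \<nu>) \<le> (SUP k\<in>{1..}. SUP \<nu>\<in>UNIV. ?err (k - 1) \<nu>)"
    using cSUP_upper[of "Suc n" "{1..}" "\<lambda>k. SUP \<nu>\<in>UNIV. ?err (k - 1) \<nu>"] by simp
  moreover have "?err n \<nu> \<le> (SUP \<nu>\<in>UNIV. ?err n \<nu>)"
    by (rule cSUP_upper) (auto intro: bdd_above_finite)
  ultimately show ?thesis by (rule order_trans[rotated])
qed

lemma lsq_api_error_step:
  assumes "H \<ge> 1" "matnorm M \<le> \<delta>FV"
    and "supnorm (\<lambda>s. matapp M (Jpol P r \<alpha> \<nu>') s - Jpol P r \<alpha> \<nu>' s) \<le> \<delta>app"
    and "supnorm w \<le> \<epsilon>"
  shows "supnorm (\<lambda>s. matapp M (\<lambda>s. (Tmu P r \<alpha> \<nu>' ^^ m) ((Tbell P r \<alpha> ^^ (H - 1)) J) s + w s) s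
                    - Jpol P r \<alpha> \<nu>' s)
    \<le> \<alpha> ^ (m + H - 1) * \<delta>FV * supnorm (\<lambda>s. J s - Jpol P r \<alpha> \<nu> s)
       + ((\<alpha> ^ m + \<alpha> ^ (m + H - 1)) / (1 - \<alpha>) * \<delta>FV + \<delta>app + \<delta>FV * \<epsilon>)"
proof -
  let ?y = "(Tmu P r \<alpha> \<nu>' ^^ m) ((Tbell P r \<alpha> ^^ (H - 1)) J)"
  let ?q = "Jpol P r \<alpha> \<nu>'"
  let ?e = "supnorm (\<lambda>s. J s - Jpol P r \<alpha> \<nu> s)"
  have FV0: "0 \<le> \<delta>FV" using matnorm_nonneg assms(2) by (rule order_trans)
  define c where "c = \<alpha> ^ (m + H - 1)"
  have "0 \<le> c" using alpha by (simp add: c_def)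
  have split_power: "\<alpha> ^ (m + H - 1) = \<alpha> ^ m * \<alpha> ^ (H - 1)"
    using \<open>H \<ge> 1\<close> by (simp add: power_add[symmetric])
  have "supnorm (\<lambda>s. ?y s - ?q s) \<le> \<alpha> ^ m * supnorm (\<lambda>s. (Tbell P r \<alpha> ^^ (H - 1)) J s - ?q s)"
    by (rule Tmu_funpow_dist_Jpol)
  also have "\<dots> \<le> \<alpha> ^ m * (\<alpha> ^ (H - 1) * ?e + 1 / (1 - \<alpha>))"
    by (rule mult_left_mono[OF Tbell_funpow_dist_Jpol]) (use alpha in simp)
  also have "\<dots> = c * ?e + \<alpha> ^ m / (1 - \<alpha>)"
    unfolding c_def split_power by (simp add: distrib_left)
  finally have y_err: "supnorm (\<lambda>s. ?y s - ?q s) \<le> c * ?e + \<alpha> ^ m / (1 - \<alpha>)" .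
  have propagated: "matnorm M * supnorm (\<lambda>s. ?y s - ?q s) \<le> c * \<delta>FV * ?e + \<alpha> ^ m / (1 - \<alpha>) * \<delta>FV"
  proof -
    have "matnorm M * supnorm (\<lambda>s. ?y s - ?q s) \<le> \<delta>FV * (c * ?e + \<alpha> ^ m / (1 - \<alpha>))"
      by (rule mult_mono[OF assms(2) y_err FV0 supnorm_nonneg])
    then show ?thesis by (simp add: algebra_simps)
  qed
  have noise: "matnorm M * supnorm w \<le> \<delta>FV * \<epsilon>"
    by (rule mult_mono[OF assms(2) assms(4) FV0 supnorm_nonneg])
  have "supnorm (\<lambda>s. matapp M (\<lambda>s. ?y s + w s) s - ?q s)
      \<le> matnorm M * supnorm (\<lambda>s. ?y s - ?q s) + supnorm (\<lambda>s. matapp M ?q s - ?q s)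
         + matnorm M * supnorm w"
    by (rule supnorm_matapp_perturbed_le)
  also have "\<dots> \<le> (c * \<delta>FV * ?e + \<alpha> ^ m / (1 - \<alpha>) * \<delta>FV) + \<delta>app + \<delta>FV * \<epsilon>"
    by (intro add_mono propagated assms(3) noise)
  also have "\<dots> \<le> c * \<delta>FV * ?e + ((\<alpha> ^ m + c) / (1 - \<alpha>) * \<delta>FV + \<delta>app + \<delta>FV * \<epsilon>)"
    using alpha FV0 \<open>0 \<le> c\<close> by (simp add: add_divide_distrib distrib_right)
  finally show ?thesis unfolding c_def .
qed

end

theorem mainTheorem3:
  fixes P :: "'s::finite \<Rightarrow> 'a::finite \<Rightarrow> 's \<Rightarrow> real"
    and r :: "'s \<Rightarrow> 'a \<Rightarrow> real"
    and \<alpha> :: real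
    and m H :: nat
    and eps_LA eps_PE :: real
    and \<phi> :: "'s \<Rightarrow> real^'d"
    and D :: "nat \<Rightarrow> 's set"
    and J :: "nat \<Rightarrow> ('s \<Rightarrow> real)"
    and \<mu> :: "nat \<Rightarrow> ('s \<Rightarrow> 'a)"
    and w :: "nat \<Rightarrow> ('s \<Rightarrow> real)"
  assumes P_nonneg: "\<And>s a j. P s a j \<ge> 0"
    and P_stoch: "\<And>s a. (\<Sum>j\<in>UNIV. P s a j) = 1"
    and r_range: "\<And>s a. 0 \<le> r s a \<and> r s a \<le> 1"
    and alpha: "0 < \<alpha>" "\<alpha> < 1"
    and m_pos: "m \<ge> 1" and H_pos: "H \<ge> 1"
    and eps: "eps_LA \<ge> 0" "eps_PE \<ge> 0"
    and rank: "\<And>k. dim (\<phi> ` D k) = CARD('d)"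
    and lookahead: "\<And>k. supnorm (\<lambda>s. (Tbell P r \<alpha> ^^ H) (J k) s
                         - Tmu P r \<alpha> (\<mu> (Suc k)) ((Tbell P r \<alpha> ^^ (H - 1)) (J k)) s) \<le> eps_LA"
    and w_supp: "\<And>k i. i \<notin> D k \<Longrightarrow> w (Suc k) i = 0"
    and w_bound: "\<And>k. supnorm (w (Suc k)) \<le> eps_PE"
    and J_step: "\<And>k. J (Suc k) = matapp (lsq_mat \<phi> (D k))
                   (\<lambda>s. (Tmu P r \<alpha> (\<mu> (Suc k)) ^^ m) ((Tbell P r \<alpha> ^^ (H - 1)) (J k)) s
                        + w (Suc k) s)"
    and FV_finite: "bdd_above ((\<lambda>k. matnorm (lsq_mat \<phi> (D (k - 1)))) ` {1..})"
  shows "let \<delta>FV = (SUP k\<in>{1..}. matnorm (lsq_mat \<phi> (D (k - 1))));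
             \<delta>app = (SUP k\<in>{1..}. SUP \<nu>\<in>(UNIV :: ('s \<Rightarrow> 'a) set).
                       supnorm (\<lambda>s. matapp (lsq_mat \<phi> (D (k - 1))) (Jpol P r \<alpha> \<nu>) s
                                     - Jpol P r \<alpha> \<nu> s));
             \<beta> = \<alpha> ^ (m + H - 1) * \<delta>FV;
             \<tau> = (\<alpha> ^ m + \<alpha> ^ (m + H - 1)) / (1 - \<alpha>) * \<delta>FV + \<delta>app + \<delta>FV * eps_PE
         in (\<forall>k\<ge>1. supnorm (\<lambda>s. J k s - Jpol P r \<alpha> (\<mu> k) s)
                    \<le> \<beta> * supnorm (\<lambda>s. J (k - 1) s - Jpol P r \<alpha> (\<mu> (k - 1)) s) + \<tau>)
          \<and> (\<beta> < 1 \<longrightarrow> (\<forall>k. supnorm (\<lambda>s. J k s - Jpol P r \<alpha> (\<mu> k) s)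
                    \<le> \<beta> ^ k * supnorm (\<lambda>s. J 0 s - Jpol P r \<alpha> (\<mu> 0) s) + \<tau> / (1 - \<beta>)))"
proof -
  interpret discounted_mdp P r \<alpha>
    using P_nonneg P_stoch r_range alpha by unfold_locales
  define \<delta>FV where "\<delta>FV = (SUP k\<in>{1..}. matnorm (lsq_mat \<phi> (D (k - 1))))"
  define \<delta>app where "\<delta>app = (SUP k\<in>{1..}. SUP \<nu>\<in>(UNIV :: ('s \<Rightarrow> 'a) set).
      supnorm (\<lambda>s. matapp (lsq_mat \<phi> (D (k - 1))) (Jpol P r \<alpha> \<nu>) s - Jpol P r \<alpha> \<nu> s))"
  define e where "e k = supnorm (\<lambda>s. J k s - Jpol P r \<alpha> (\<mu> k) s)" for k
  define \<beta> where "\<beta> = \<alpha> ^ (m + H - 1) * \<delta>FV"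
  define \<tau> where "\<tau> = (\<alpha> ^ m + \<alpha> ^ (m + H - 1)) / (1 - \<alpha>) * \<delta>FV + \<delta>app + \<delta>FV * eps_PE"
  have FV: "matnorm (lsq_mat \<phi> (D n)) \<le> \<delta>FV" for n
    unfolding \<delta>FV_def using cSUP_upper[OF _ FV_finite, of "Suc n"] by simp
  have app: "supnorm (\<lambda>s. matapp (lsq_mat \<phi> (D n)) (Jpol P r \<alpha> \<nu>) s - Jpol P r \<alpha> \<nu> s) \<le> \<delta>app" for n \<nu>
    unfolding \<delta>app_def by (rule approx_error_le_SUP[OF FV_finite])
  have step: "e (Suc n) \<le> \<beta> * e n + \<tau>" for n
    unfolding e_def \<beta>_def \<tau>_def J_step
    using lsq_api_error_step[OF H_pos FV app w_bound] .
  have "0 \<le> \<beta>" "0 \<le> \<tau>"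
    using alpha eps order_trans[OF matnorm_nonneg FV] order_trans[OF supnorm_nonneg app]
    unfolding \<beta>_def \<tau>_def by simp_all
  then have "\<beta> < 1 \<longrightarrow> (\<forall>k. e k \<le> \<beta> ^ k * e 0 + \<tau> / (1 - \<beta>))"
    using affine_recursion_bound[of e \<beta> \<tau>, OF step] by blast
  moreover have "e k \<le> \<beta> * e (k - 1) + \<tau>" if "k \<ge> 1" for k
    using step[of "k - 1"] that by simp
  ultimately show ?thesis
    unfolding Let_def \<delta>FV_def[symmetric] \<delta>app_def[symmetric] \<beta>_def[symmetric] \<tau>_def[symmetric]
    unfolding e_def by blast
qed

end
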